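(* (Soundness) For all terms $e_1, e_2$: if $\lambda_{need} \vdash e_1 = e_2$, then $e_1$ and $e_2$ are observationally equivalent, i.e. for every context $C ::= [\,] \mid \lambda x.C \mid C\,e \mid e\,C$, $\mathrm{eval}_{need}(C[e_1]) = \mathrm{eval}_{need}(C[e_2])$.
   Context: Terms: $e ::= x \mid \lambda x.e \mid e\,e$ (modulo $\alpha$-equivalence, Barendregt's variable convention). Values: $v ::= \lambda x.e$. A context is a term with one hole $[\,]$; $C[e]$ is plugging, $C_1[C_2]$ composition. Answer contexts: $A ::= [\,] \mid A[\lambda x.A]\,e$. Answers: $a ::= A[v]$. Outer partial answer contexts: $A^{\uparrow} ::= [\,] \mid A[A^{\uparrow}]\,e$. Inner partial answer contexts: $A^{\downarrow} ::= [\,] \mid A[\lambda x.A^{\downarrow}]$. Evaluation contexts: $E ::= [\,] \mid E\,e \mid A[E] \mid A^{\uparrow}[A[\lambda x.A^{\downarrow}[E[x]]]\,E]$, where in the last production $A^{\uparrow}[A^{\downarrow}]$ must be an answer context. Axiom $\beta_{need}$: $A^{\uparrow}[A_1[\lambda x.A^{\downarrow}[E[x]]]\,A_2[v]] \;\beta_{need}\; A^{\uparrow}[A_1[A_2[(A^{\downarrow}[E[x]])\{x:=v\}]]]$ provided $A^{\uparrow}[A^{\downarrow}]$ is an answer context ($\{x:=v\}$ is capture-avoiding substitution for all free occurrences of $x$). $\lambda_{need}\vdash e_1 = e_2$ means $e_1,e_2$ are related by the least equivalence relation containing the compatible closure of $\beta_{need}$. The evaluator: $\mathrm{eval}_{need}(e)=\texttt{done}$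 iff there exists an answer $a$ with $\lambda_{need}\vdash e = a$, and undefined otherwise. *)

theory Defs
  imports Main
begin

text \<open>Lambda terms modulo alpha-equivalence, represented with de Bruijn indices.
  Plugging a term into a context is capturing (indices in the plugged term
  refer to the binders of the context on the path to the hole).\<close>

datatype trm = Var nat | Lam trm | App trm trm

datatype ctx = Hole | CLam ctx | CAppL ctx trm | CAppR trm ctx

fun plug :: "ctx \<Rightarrow> trm \<Rightarrow> trm" where
  "plug Hole e = e"
| "plug (CLam C) e = Lam (plug C e)"
| "plug (CAppL C t) e = App (plug C e) t"
| "plug (CAppR t C) e = App t (plug C e)"

fun cplug :: "ctx \<Rightarrow> ctx \<Rightarrow> ctx" where
  "cplug Hole D = D"
| "cplug (CLam C) D = CLam (cplug C D)"
| "cplug (CAppL C t) D = CAppL (cplug C D) t"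
| "cplug (CAppR t C) D = CAppR t (cplug C D)"

fun nb :: "ctx \<Rightarrow> nat" where
  "nb Hole = 0"
| "nb (CLam C) = Suc (nb C)"
| "nb (CAppL C t) = nb C"
| "nb (CAppR t C) = nb C"

fun liftn :: "nat \<Rightarrow> nat \<Rightarrow> trm \<Rightarrow> trm" where
  "liftn n k (Var i) = (if i < k then Var i else Var (i + n))"
| "liftn n k (Lam t) = Lam (liftn n (Suc k) t)"
| "liftn n k (App t u) = App (liftn n k t) (liftn n k u)"

fun subst :: "trm \<Rightarrow> trm \<Rightarrow> nat \<Rightarrow> trm" where
  "subst (Var i) s k = (if k < i then Var (i - 1) else if i = k then s else Var i)"
| "subst (Lam t) s k = Lam (subst t (liftn 1 0 s) (Suc k))"
| "subst (App t u) s k = App (subst t s k) (subst u s k)"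

inductive ans_ctx :: "ctx \<Rightarrow> bool" where
  "ans_ctx Hole"
| "ans_ctx A1 \<Longrightarrow> ans_ctx A2 \<Longrightarrow> ans_ctx (CAppL (cplug A1 (CLam A2)) e)"

inductive outer_ctx :: "ctx \<Rightarrow> bool" where
  "outer_ctx Hole"
| "ans_ctx A \<Longrightarrow> outer_ctx A' \<Longrightarrow> outer_ctx (CAppL (cplug A A') e)"

inductive inner_ctx :: "ctx \<Rightarrow> bool" where
  "inner_ctx Hole"
| "ans_ctx A \<Longrightarrow> inner_ctx A' \<Longrightarrow> inner_ctx (cplug A (CLam A'))"

text \<open>Evaluation contexts
  E ::= [] | E e | A[E] | A\<up>[A[\<lambda>x.A\<down>[E[x]]] E]  with A\<up>[A\<down>] an answer context.
  The occurrence of x at the hole of E[x] is the variable bound by the displayed \<lambda>,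
  i.e. de Bruijn index nb A\<down> + nb E.\<close>
inductive ev_ctx :: "ctx \<Rightarrow> bool" where
  "ev_ctx Hole"
| "ev_ctx E \<Longrightarrow> ev_ctx (CAppL E e)"
| "ans_ctx A \<Longrightarrow> ev_ctx E \<Longrightarrow> ev_ctx (cplug A E)"
| "outer_ctx Aup \<Longrightarrow> ans_ctx A \<Longrightarrow> inner_ctx Adn \<Longrightarrow> ev_ctx E1 \<Longrightarrow> ev_ctx E2 \<Longrightarrow>
   ans_ctx (cplug Aup Adn) \<Longrightarrow>
   ev_ctx (cplug Aup (CAppR (plug A (Lam (plug Adn (plug E1 (Var (nb Adn + nb E1)))))) E2))"

definition is_answer :: "trm \<Rightarrow> bool" where
  "is_answer a \<longleftrightarrow> (\<exists>A b. ans_ctx A \<and> a = plug A (Lam b))"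

text \<open>The axiom beta_need:
  A\<up>[A1[\<lambda>x.A\<down>[E[x]]] A2[v]]  \<rightarrow>  A\<up>[A1[A2[(A\<down>[E[x]]){x:=v}]]].
  In de Bruijn form, the body is moved under the binders of A2 (shift by nb A2,
  keeping x = index 0 fixed), and v is moved under the binders of A1 (shift the indices
  of v that are free outside A2 by nb A1); this is what Barendregt's convention
  guarantees in the named presentation.\<close>
inductive beta_need :: "trm \<Rightarrow> trm \<Rightarrow> bool" where
  "outer_ctx Aup \<Longrightarrow> ans_ctx A1 \<Longrightarrow> inner_ctx Adn \<Longrightarrow> ev_ctx E \<Longrightarrow> ans_ctx A2 \<Longrightarrow>
   ans_ctx (cplug Aup Adn) \<Longrightarrow>
   body = plug Adn (plug E (Var (nb Adn + nb E))) \<Longrightarrow>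
   beta_need
     (plug Aup (App (plug A1 (Lam body)) (plug A2 (Lam b))))
     (plug Aup (plug A1 (plug A2
        (subst (liftn (nb A2) 1 body) (liftn (nb A1) (nb A2) (Lam b)) 0))))"

definition need_step :: "trm \<Rightarrow> trm \<Rightarrow> bool" where
  "need_step e1 e2 \<longleftrightarrow> (\<exists>C l r. beta_need l r \<and> e1 = plug C l \<and> e2 = plug C r)"

definition need_eq :: "trm \<Rightarrow> trm \<Rightarrow> bool" where
  "need_eq = equivclp need_step"

datatype result = Done

definition eval_need :: "trm \<Rightarrow> result option" where
  "eval_need e = (if \<exists>a. is_answer a \<and> need_eq e a then Some Done else None)"

end

theory Submission
  imports Defs
begin

text \<open>Since eval_need is defined through provable equality, it is constant on
  equivalence classes of need_eq; soundness thus reduces to need_eq being a congruence,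
  which holds because the compatible closure of beta_need is closed under plugging.\<close>

lemma plug_cplug: "plug (cplug C D) e = plug C (plug D e)"
  by (induction C) auto

lemma need_step_plug: "need_step e1 e2 \<Longrightarrow> need_step (plug C e1) (plug C e2)"
  unfolding need_step_def by (metis plug_cplug)

lemma equivclp_map:
  assumes "\<And>x y. r x y \<Longrightarrow> r (f x) (f y)"
    and "equivclp r x y"
  shows "equivclp r (f x) (f y)"
  using assms(2)
proof (induction rule: equivclp_induct)
  case base
  show ?case by simp
next
  case (step y z)
  from step.hyps(2) have "r (f y) (f z) \<or> r (f z) (f y)"
    by (auto simp: symclp_def intro: assms(1))
  with step.IH show ?case
    by (rule equivclp_into_equivclp)
qed

lemma need_eq_plug: "need_eq e1 e2 \<Longrightarrow> need_eq (plug C e1) (plug C e2)"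
  unfolding need_eq_def
  using equivclp_map[of need_step "plug C"] need_step_plug by blast

lemma eval_need_need_eq: "need_eq e1 e2 \<Longrightarrow> eval_need e1 = eval_need e2"
  unfolding eval_need_def need_eq_def by (metis equivclp_sym equivclp_trans)

theorem theorem3:
  fixes e1 e2 :: trm
  assumes "need_eq e1 e2"
  shows "\<forall>C. eval_need (plug C e1) = eval_need (plug C e2)"
  using assms by (simp add: eval_need_need_eq need_eq_plug)

end
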